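(* Let $f\in\mathbf{C}\{X,Y\}$ be a nonzero power series without constant term such that the curve $f=0$ is reduced, and let $l\in\mathbf{C}\{X,Y\}$ be a power series without constant term with $\operatorname{ord} l=1$. Let $J(f,l)=\frac{\partial f}{\partial X}\frac{\partial l}{\partial Y}-\frac{\partial f}{\partial Y}\frac{\partial l}{\partial X}$ and assume $J(f,l)(0,0)=0$. Then $l$ does not divide $f$ in $\mathbf{C}\{X,Y\}$ (i.e. $l=0$ is not a branch of $f=0$) if and only if $l$ does not divide $J(f,l)$ (i.e. $l=0$ is not a branch of the curve $J(f,l)=0$).
   Context: $\mathbf{C}\{X,Y\}$ denotes the ring of convergent complex power series in $X,Y$. A curve $f=0$ is reduced if $f$ has no multiple irreducible factors; the branches of $f=0$ are the curves $f_i=0$ for the irreducible factors $f_i$ of $f$. The curve $l=0$ with $\operatorname{ord} l=1$ is called regular. *)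

theory Defs
  imports "HOL-Analysis.Analysis" "HOL-Library.Extended_Nat"
begin

text \<open>A bivariate complex power series is represented by its coefficient function:
  a i j is the coefficient of X^i Y^j.\<close>
type_synonym cps = "nat \<Rightarrow> nat \<Rightarrow> complex"

definition convergent_ps :: "cps \<Rightarrow> bool" where
  "convergent_ps a \<longleftrightarrow>
     (\<exists>r::real. r > 0 \<and> (\<lambda>(i,j). norm (a i j) * r ^ (i + j)) summable_on (UNIV :: (nat \<times> nat) set))"

definition ps_zero :: cps where "ps_zero = (\<lambda>_ _. 0)"
definition ps_one :: cps where "ps_one = (\<lambda>i j. if i = 0 \<and> j = 0 then 1 else 0)"

definition ps_mul :: "cps \<Rightarrow> cps \<Rightarrow> cps" where
  "ps_mul a b = (\<lambda>i j. \<Sum>p\<le>i. \<Sum>q\<le>j. a p q * b (i - p) (j - q))"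

definition ps_sub :: "cps \<Rightarrow> cps \<Rightarrow> cps" where
  "ps_sub a b = (\<lambda>i j. a i j - b i j)"

definition ps_dX :: "cps \<Rightarrow> cps" where
  "ps_dX a = (\<lambda>i j. of_nat (Suc i) * a (Suc i) j)"
definition ps_dY :: "cps \<Rightarrow> cps" where
  "ps_dY a = (\<lambda>i j. of_nat (Suc j) * a i (Suc j))"

definition ps_jac :: "cps \<Rightarrow> cps \<Rightarrow> cps" where
  "ps_jac f l = ps_sub (ps_mul (ps_dX f) (ps_dY l)) (ps_mul (ps_dY f) (ps_dX l))"

definition ps_ord :: "cps \<Rightarrow> enat" where
  "ps_ord a = (if a = ps_zero then \<infinity>
               else enat (LEAST n. \<exists>i j. i + j = n \<and> a i j \<noteq> 0))"

definition ps_dvd :: "cps \<Rightarrow> cps \<Rightarrow> bool" where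
  "ps_dvd g f \<longleftrightarrow> (\<exists>h. convergent_ps h \<and> f = ps_mul g h)"

definition ps_unit :: "cps \<Rightarrow> bool" where
  "ps_unit u \<longleftrightarrow> convergent_ps u \<and> (\<exists>v. convergent_ps v \<and> ps_mul u v = ps_one)"

definition ps_irreducible :: "cps \<Rightarrow> bool" where
  "ps_irreducible g \<longleftrightarrow> convergent_ps g \<and> g \<noteq> ps_zero \<and> \<not> ps_unit g \<and>
     (\<forall>a b. convergent_ps a \<and> convergent_ps b \<and> g = ps_mul a b \<longrightarrow> ps_unit a \<or> ps_unit b)"

definition ps_reduced :: "cps \<Rightarrow> bool" where
  "ps_reduced f \<longleftrightarrow> \<not> (\<exists>g. ps_irreducible g \<and> ps_dvd (ps_mul g g) f)"

end

theory Submission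
  imports Defs "HOL-Computational_Algebra.Formal_Power_Series"
begin

unbundle no vec_syntax
notation fps_nth (infixl \<open>$\<close> 75)

text \<open>
  If \<open>f = l h\<close> then \<open>J(f,l) = l J(h,l)\<close>. Conversely, exchanging X and Y if necessary, the
  coefficient of Y in l is nonzero. Then f can be divided by l in \<open>\<complex>{X,Y}\<close> with a remainder
  \<open>r(X)\<close> free of Y: the coefficients of the quotient q are determined recursively, and a
  majorant estimate shows that q converges. Now \<open>J(f,l) = l J(q,l) + r'(X) l\<^sub>Y\<close> with
  \<open>l\<^sub>Y(0,0) \<noteq> 0\<close>, and a series \<open>s(X) u\<close> with \<open>u(0,0) \<noteq> 0\<close> is a multiple of l only if \<open>s = 0\<close>.
  So if l divides \<open>J(f,l)\<close>, then \<open>r' = 0\<close>, hence \<open>r = f(0,0) = 0\<close> and l divides f.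
\<close>

section \<open>Formal identities\<close>

lemma ps_mul_eq_sum_Times:
  "ps_mul a b i j = (\<Sum>(p, q)\<in>{..i} \<times> {..j}. a p q * b (i - p) (j - q))"
  by (simp add: ps_mul_def sum.cartesian_product)

definition fps_of_ps :: "cps \<Rightarrow> complex fps fps" where
  "fps_of_ps a = Abs_fps (\<lambda>i. Abs_fps (\<lambda>j. a i j))"

lemma fps_of_ps_nth [simp]: "fps_of_ps a $ i $ j = a i j"
  by (simp add: fps_of_ps_def)

lemma fps_of_ps_inject: "fps_of_ps a = fps_of_ps b \<Longrightarrow> a = b"
  by (metis fps_of_ps_nth ext)

lemma fps_of_ps_mul: "fps_of_ps (ps_mul a b) = fps_of_ps a * fps_of_ps b"
  by (intro fps_ext) (simp add: fps_mult_nth fps_sum_nth ps_mul_def atLeast0AtMost)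

lemma fps_of_ps_sub: "fps_of_ps (ps_sub a b) = fps_of_ps a - fps_of_ps b"
  by (intro fps_ext) (simp add: ps_sub_def)

lemma fps_of_ps_zero: "fps_of_ps ps_zero = 0"
  by (intro fps_ext) (simp add: ps_zero_def)

definition fps_deriv_inner :: "'a::comm_ring_1 fps fps \<Rightarrow> 'a fps fps" where
  "fps_deriv_inner F = Abs_fps (\<lambda>i. fps_deriv (F $ i))"

lemma fps_deriv_inner_nth [simp]: "fps_deriv_inner F $ i = fps_deriv (F $ i)"
  by (simp add: fps_deriv_inner_def)

lemma fps_deriv_inner_mult:
  "fps_deriv_inner (F * G) = fps_deriv_inner F * G + F * fps_deriv_inner G"
  by (intro fps_ext) (simp add: fps_mult_nth fps_deriv_sum sum.distrib)

lemma fps_deriv_inner_diff: "fps_deriv_inner (F - G) = fps_deriv_inner F - fps_deriv_inner G"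
  by (intro fps_ext) simp

lemma fps_of_ps_dX: "fps_of_ps (ps_dX a) = fps_deriv (fps_of_ps a)"
  by (intro fps_ext) (simp add: ps_dX_def fps_of_nat[symmetric] del: of_nat_Suc)

lemma fps_of_ps_dY: "fps_of_ps (ps_dY a) = fps_deriv_inner (fps_of_ps a)"
  by (intro fps_ext) (simp add: ps_dY_def)

lemma fps_of_ps_jac:
  "fps_of_ps (ps_jac f l) =
     fps_deriv (fps_of_ps f) * fps_deriv_inner (fps_of_ps l)
     - fps_deriv_inner (fps_of_ps f) * fps_deriv (fps_of_ps l)"
  by (simp add: ps_jac_def fps_of_ps_sub fps_of_ps_mul fps_of_ps_dX fps_of_ps_dY)

lemma ps_jac_mul_left: "ps_jac (ps_mul l h) l = ps_mul l (ps_jac h l)"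
  by (rule fps_of_ps_inject)
    (simp add: fps_of_ps_jac fps_of_ps_mul fps_deriv_inner_mult algebra_simps)

lemma ps_jac_Y_free_remainder:
  assumes "ps_dY (ps_sub f (ps_mul l q)) = ps_zero"
  shows "ps_mul (ps_dX (ps_sub f (ps_mul l q))) (ps_dY l)
           = ps_sub (ps_jac f l) (ps_mul l (ps_jac q l))"
proof (rule fps_of_ps_inject)
  have "fps_deriv_inner (fps_of_ps f) = fps_deriv_inner (fps_of_ps l * fps_of_ps q)"
    using arg_cong[OF assms, of fps_of_ps]
    by (simp add: fps_of_ps_dY fps_of_ps_sub fps_of_ps_mul fps_of_ps_zero fps_deriv_inner_diff)
  then show "fps_of_ps (ps_mul (ps_dX (ps_sub f (ps_mul l q))) (ps_dY l))
      = fps_of_ps (ps_sub (ps_jac f l) (ps_mul l (ps_jac q l)))"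
    by (simp add: fps_of_ps_jac fps_of_ps_mul fps_of_ps_sub fps_of_ps_dX fps_of_ps_dY
        fps_deriv_inner_mult algebra_simps)
qed

lemma ps_mul_sub_right: "ps_mul l (ps_sub a b) = ps_sub (ps_mul l a) (ps_mul l b)"
  by (rule fps_of_ps_inject) (simp add: fps_of_ps_mul fps_of_ps_sub algebra_simps)

definition ps_neg :: "cps \<Rightarrow> cps" where
  "ps_neg a = (\<lambda>i j. - a i j)"

definition ps_swap :: "cps \<Rightarrow> cps" where
  "ps_swap a = (\<lambda>i j. a j i)"

lemma ps_swap_swap [simp]: "ps_swap (ps_swap a) = a"
  by (simp add: ps_swap_def)

lemma ps_swap_mul: "ps_swap (ps_mul a b) = ps_mul (ps_swap a) (ps_swap b)"
  unfolding ps_swap_def ps_mul_def by (intro ext) (rule sum.swap)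

lemma ps_dX_swap: "ps_dX (ps_swap a) = ps_swap (ps_dY a)"
  by (simp add: ps_swap_def ps_dX_def ps_dY_def)

lemma ps_dY_swap: "ps_dY (ps_swap a) = ps_swap (ps_dX a)"
  by (simp add: ps_swap_def ps_dX_def ps_dY_def)

lemma ps_jac_swap: "ps_jac (ps_swap f) (ps_swap l) = ps_swap (ps_neg (ps_jac f l))"
  by (simp add: ps_jac_def ps_dX_swap ps_dY_swap ps_swap_mul[symmetric])
    (simp add: ps_swap_def ps_neg_def ps_sub_def)

section \<open>Convergence\<close>

lemma sum_comp_le_of_inj_on:
  fixes g :: "'b \<Rightarrow> real"
  assumes "finite B" "inj_on h A" "h ` A \<subseteq> B" "\<And>y. y \<in> B \<Longrightarrow> 0 \<le> g y"
  shows "(\<Sum>x\<in>A. g (h x)) \<le> sum g B"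
proof -
  have "(\<Sum>x\<in>A. g (h x)) = sum g (h ` A)" using assms(2) by (simp add: sum.reindex)
  also have "\<dots> \<le> sum g B" using assms(1,3,4) by (intro sum_mono2) auto
  finally show ?thesis .
qed

lemma finite_subset_square: "finite (S :: (nat \<times> nat) set) \<Longrightarrow> \<exists>N. S \<subseteq> {..N} \<times> {..N}"
proof -
  assume "finite S"
  define N where "N = Max (fst ` S \<union> snd ` S)"
  have "k \<le> N" if "k \<in> fst ` S \<union> snd ` S" for k
    unfolding N_def using \<open>finite S\<close> that by (intro Max_ge) auto
  then have "S \<subseteq> {..N} \<times> {..N}" by (force simp: mem_Times_iff)
  then show ?thesis ..
qed

definition ps_weight :: "cps \<Rightarrow> real \<Rightarrow> real \<Rightarrow> nat \<times> nat \<Rightarrow> real" where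
  "ps_weight a \<rho> \<sigma> = (\<lambda>(i, j). norm (a i j) * \<rho> ^ i * \<sigma> ^ j)"

lemma ps_weight_Pair [simp]: "ps_weight a \<rho> \<sigma> (i, j) = norm (a i j) * \<rho> ^ i * \<sigma> ^ j"
  by (simp add: ps_weight_def)

lemma ps_weight_nonneg: "0 \<le> \<rho> \<Longrightarrow> 0 \<le> \<sigma> \<Longrightarrow> 0 \<le> ps_weight a \<rho> \<sigma> x"
  by (cases x) simp

definition ps_bounded :: "cps \<Rightarrow> real \<Rightarrow> real \<Rightarrow> real \<Rightarrow> bool" where
  "ps_bounded a \<rho> \<sigma> B \<longleftrightarrow> (\<forall>S. finite S \<longrightarrow> sum (ps_weight a \<rho> \<sigma>) S \<le> B)"

lemma ps_boundedD: "ps_bounded a \<rho> \<sigma> B \<Longrightarrow> finite S \<Longrightarrow> sum (ps_weight a \<rho> \<sigma>) S \<le> B"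
  unfolding ps_bounded_def by blast

lemma ps_bounded_nonneg: "ps_bounded a \<rho> \<sigma> B \<Longrightarrow> 0 \<le> B"
  using ps_boundedD[of a \<rho> \<sigma> B "{}"] by simp

lemma ps_bounded_sum_reindex:
  assumes "ps_bounded a \<rho> \<sigma> B" "finite S" "inj_on h S" "0 \<le> \<rho>" "0 \<le> \<sigma>"
  shows "(\<Sum>x\<in>S. ps_weight a \<rho> \<sigma> (h x)) \<le> B"
proof -
  have "(\<Sum>x\<in>S. ps_weight a \<rho> \<sigma> (h x)) = sum (ps_weight a \<rho> \<sigma>) (h ` S)"
    using assms(3) by (simp add: sum.reindex)
  also have "\<dots> \<le> B"
    using assms(1,2) by (intro ps_boundedD) auto
  finally show ?thesis .
qed

lemma ps_bounded_mono:
  assumes "ps_bounded a \<rho> \<sigma> B" "0 \<le> \<rho>'" "\<rho>' \<le> \<rho>" "0 \<le> \<sigma>'" "\<sigma>' \<le> \<sigma>"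
  shows "ps_bounded a \<rho>' \<sigma>' B"
  unfolding ps_bounded_def
proof (intro allI impI)
  fix S :: "(nat \<times> nat) set"
  assume "finite S"
  have "sum (ps_weight a \<rho>' \<sigma>') S \<le> sum (ps_weight a \<rho> \<sigma>) S"
    using assms(2-) by (intro sum_mono) (auto intro!: mult_mono power_mono)
  also have "\<dots> \<le> B" using assms(1) \<open>finite S\<close> by (rule ps_boundedD)
  finally show "sum (ps_weight a \<rho>' \<sigma>') S \<le> B" .
qed

lemma convergent_ps_iff_bounded: "convergent_ps a \<longleftrightarrow> (\<exists>r>0. \<exists>B. ps_bounded a r r B)"
proof -
  have weight: "ps_weight a r r = (\<lambda>(i, j). norm (a i j) * r ^ (i + j))" for r
    by (auto simp: power_add mult.assoc)
  have "(\<lambda>(i, j). norm (a i j) * r ^ (i + j)) summable_on UNIV \<longleftrightarrow> (\<exists>B. ps_bounded a r r B)"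
    if "r > 0" for r
  proof
    assume "(\<lambda>(i, j). norm (a i j) * r ^ (i + j)) summable_on UNIV"
    then have "ps_bounded a r r (infsum (ps_weight a r r) UNIV)"
      unfolding ps_bounded_def weight
      using that by (auto intro!: finite_sum_le_infsum)
    then show "\<exists>B. ps_bounded a r r B" ..
  next
    assume "\<exists>B. ps_bounded a r r B"
    then obtain B where "ps_bounded a r r B" ..
    then have "bdd_above (sum (ps_weight a r r) ` {S. S \<subseteq> UNIV \<and> finite S})"
      by (intro bdd_aboveI[of _ B]) (auto dest: ps_boundedD)
    then show "(\<lambda>(i, j). norm (a i j) * r ^ (i + j)) summable_on UNIV"
      unfolding weight[symmetric] using that
      by (intro nonneg_bdd_above_summable_on) (auto simp: ps_weight_nonneg)
  qed
  then show ?thesis unfolding convergent_ps_def by blast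
qed

lemma convergent_psI:
  assumes "0 < \<rho>" "0 < \<sigma>" "ps_bounded a \<rho> \<sigma> B"
  shows "convergent_ps a"
  unfolding convergent_ps_iff_bounded
  using assms ps_bounded_mono[OF assms(3), of "min \<rho> \<sigma>" "min \<rho> \<sigma>"]
  by (intro exI[of _ "min \<rho> \<sigma>"]) auto

lemma convergent_ps_common_radius:
  assumes "convergent_ps a" "convergent_ps b"
  obtains r A B where "0 < r" "ps_bounded a r r A" "ps_bounded b r r B"
proof -
  obtain r1 A r2 B where "0 < r1" "ps_bounded a r1 r1 A" "0 < r2" "ps_bounded b r2 r2 B"
    using assms unfolding convergent_ps_iff_bounded by blast
  then show thesis
    using ps_bounded_mono[of _ r1 r1 _ "min r1 r2" "min r1 r2"]
      ps_bounded_mono[of _ r2 r2 _ "min r1 r2" "min r1 r2"]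
    by (intro that[of "min r1 r2"]) auto
qed

lemma ps_bounded_sub:
  assumes "ps_bounded a \<rho> \<sigma> A" "ps_bounded b \<rho> \<sigma> B" "0 \<le> \<rho>" "0 \<le> \<sigma>"
  shows "ps_bounded (ps_sub a b) \<rho> \<sigma> (A + B)"
  unfolding ps_bounded_def
proof (intro allI impI)
  fix S :: "(nat \<times> nat) set"
  assume "finite S"
  have "sum (ps_weight (ps_sub a b) \<rho> \<sigma>) S \<le> sum (\<lambda>x. ps_weight a \<rho> \<sigma> x + ps_weight b \<rho> \<sigma> x) S"
  proof (rule sum_mono, clarify)
    fix i j
    show "ps_weight (ps_sub a b) \<rho> \<sigma> (i, j) \<le> ps_weight a \<rho> \<sigma> (i, j) + ps_weight b \<rho> \<sigma> (i, j)"
      using assms(3,4) norm_triangle_ineq4[of "a i j" "b i j"]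
      by (simp add: ps_sub_def mult.assoc flip: distrib_right) (simp add: mult_right_mono)
  qed
  also have "\<dots> \<le> A + B"
    using assms(1,2)[THEN ps_boundedD, OF \<open>finite S\<close>] by (simp add: sum.distrib)
  finally show "sum (ps_weight (ps_sub a b) \<rho> \<sigma>) S \<le> A + B" .
qed

lemma ps_weight_mul_le:
  assumes "0 \<le> \<rho>" "0 \<le> \<sigma>"
  shows "ps_weight (ps_mul a b) \<rho> \<sigma> (i, j)
    \<le> (\<Sum>(p, q)\<in>{..i} \<times> {..j}. ps_weight a \<rho> \<sigma> (p, q) * ps_weight b \<rho> \<sigma> (i - p, j - q))"
proof -
  have "ps_weight (ps_mul a b) \<rho> \<sigma> (i, j)
      \<le> (\<Sum>(p, q)\<in>{..i} \<times> {..j}. norm (a p q * b (i - p) (j - q))) * (\<rho> ^ i * \<sigma> ^ j)"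
    unfolding ps_weight_Pair ps_mul_eq_sum_Times mult.assoc using assms
    by (intro mult_right_mono) (auto intro: order_trans[OF norm_sum] simp: case_prod_unfold)
  also have "\<dots> = (\<Sum>(p, q)\<in>{..i} \<times> {..j}. ps_weight a \<rho> \<sigma> (p, q) * ps_weight b \<rho> \<sigma> (i - p, j - q))"
    unfolding sum_distrib_right
  proof (rule sum.cong[OF refl], clarify)
    fix p q assume "p \<le> i" "q \<le> j"
    then have "\<rho> ^ i * \<sigma> ^ j = (\<rho> ^ p * \<sigma> ^ q) * (\<rho> ^ (i - p) * \<sigma> ^ (j - q))"
      by (simp add: mult_ac flip: power_add)
    then show "norm (a p q * b (i - p) (j - q)) * (\<rho> ^ i * \<sigma> ^ j)
        = ps_weight a \<rho> \<sigma> (p, q) * ps_weight b \<rho> \<sigma> (i - p, j - q)"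
      by (simp add: norm_mult mult_ac)
  qed
  finally show ?thesis .
qed

lemma ps_bounded_mul:
  assumes "ps_bounded a \<rho> \<sigma> A" "ps_bounded b \<rho> \<sigma> B" "0 \<le> \<rho>" "0 \<le> \<sigma>"
  shows "ps_bounded (ps_mul a b) \<rho> \<sigma> (A * B)"
  unfolding ps_bounded_def
proof (intro allI impI)
  fix S :: "(nat \<times> nat) set"
  assume "finite S"
  then obtain N where "S \<subseteq> {..N} \<times> {..N}" using finite_subset_square by blast
  define box where "box = {..N} \<times> {..N}"
  let ?wa = "ps_weight a \<rho> \<sigma>" and ?wb = "ps_weight b \<rho> \<sigma>"
  let ?T = "SIGMA x:S. {..fst x} \<times> {..snd x}"
  let ?split = "\<lambda>(x, y). (y, (fst x - fst y, snd x - snd y))"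
  have "sum (ps_weight (ps_mul a b) \<rho> \<sigma>) S
      \<le> (\<Sum>(i, j)\<in>S. \<Sum>(p, q)\<in>{..i} \<times> {..j}. ?wa (p, q) * ?wb (i - p, j - q))"
  proof (rule sum_mono, clarify)
    fix i j
    show "ps_weight (ps_mul a b) \<rho> \<sigma> (i, j)
        \<le> (\<Sum>(p, q)\<in>{..i} \<times> {..j}. ?wa (p, q) * ?wb (i - p, j - q))"
      by (rule ps_weight_mul_le[OF assms(3,4)])
  qed
  also have "\<dots> = (\<Sum>z\<in>?T. (\<lambda>(y, y'). ?wa y * ?wb y') (?split z))"
    using \<open>finite S\<close> by (simp add: sum.Sigma case_prod_unfold ps_weight_def)
  also have "\<dots> \<le> (\<Sum>(y, y')\<in>box \<times> box. ?wa y * ?wb y')"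
  proof (rule sum_comp_le_of_inj_on)
    show "inj_on ?split ?T"
    proof (rule inj_onI)
      fix z z' assume "z \<in> ?T" "z' \<in> ?T" "?split z = ?split z'"
      then show "z = z'" by (auto simp: prod_eq_iff case_prod_unfold)
    qed
    show "?split ` ?T \<subseteq> box \<times> box"
      using \<open>S \<subseteq> {..N} \<times> {..N}\<close> by (auto simp: box_def)
  qed (use assms(3,4) in \<open>auto simp: box_def ps_weight_nonneg\<close>)
  also have "\<dots> = sum ?wa box * sum ?wb box"
    by (simp add: sum_product sum.cartesian_product)
  also have "\<dots> \<le> A * B"
    using assms ps_bounded_nonneg[OF assms(1)]
    by (intro mult_mono ps_boundedD sum_nonneg ps_weight_nonneg) (auto simp: box_def)
  finally show "sum (ps_weight (ps_mul a b) \<rho> \<sigma>) S \<le> A * B" .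
qed

lemma ps_bounded_swap: "ps_bounded a \<rho> \<sigma> B \<Longrightarrow> ps_bounded (ps_swap a) \<sigma> \<rho> B"
  unfolding ps_bounded_def
proof (intro allI impI)
  fix S :: "(nat \<times> nat) set"
  assume "\<forall>S. finite S \<longrightarrow> sum (ps_weight a \<rho> \<sigma>) S \<le> B" "finite S"
  moreover have "sum (ps_weight (ps_swap a) \<sigma> \<rho>) S = sum (ps_weight a \<rho> \<sigma>) (prod.swap ` S)"
    by (simp add: sum.reindex ps_weight_def case_prod_unfold ps_swap_def mult_ac)
  ultimately show "sum (ps_weight (ps_swap a) \<sigma> \<rho>) S \<le> B" by simp
qed

lemma ps_bounded_dX:
  assumes "ps_bounded a \<rho> \<sigma> B" "0 < \<rho>" "0 \<le> \<sigma>"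
  shows "ps_bounded (ps_dX a) (\<rho> / 2) \<sigma> (B / \<rho>)"
  unfolding ps_bounded_def
proof (intro allI impI)
  fix S :: "(nat \<times> nat) set"
  assume "finite S"
  let ?shift = "\<lambda>(i, j). (Suc i, j)"
  have pointwise: "ps_weight (ps_dX a) (\<rho> / 2) \<sigma> x \<le> ps_weight a \<rho> \<sigma> (?shift x) / \<rho>" for x
  proof (cases x)
    case (Pair i j)
    have "real (Suc i) \<le> 2 ^ i"
      by (induction i) auto
    then have "real (Suc i) * (\<rho> / 2) ^ i \<le> 2 ^ i * (\<rho> / 2) ^ i"
      using assms(2) by (intro mult_right_mono) auto
    also have "\<dots> = \<rho> ^ i"
      by (simp add: power_divide)
    finally have "real (Suc i) * (\<rho> / 2) ^ i \<le> \<rho> ^ i" .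
    then have "norm (a (Suc i) j) * (real (Suc i) * (\<rho> / 2) ^ i) * \<sigma> ^ j
        \<le> norm (a (Suc i) j) * \<rho> ^ i * \<sigma> ^ j"
      using assms(3) by (intro mult_right_mono mult_left_mono) auto
    then show ?thesis
      using Pair assms(2) by (simp add: ps_dX_def norm_mult mult_ac del: of_nat_Suc)
  qed
  have "sum (ps_weight (ps_dX a) (\<rho> / 2) \<sigma>) S \<le> (\<Sum>x\<in>S. ps_weight a \<rho> \<sigma> (?shift x)) / \<rho>"
    unfolding sum_divide_distrib by (intro sum_mono pointwise)
  also have "\<dots> \<le> B / \<rho>"
    using assms \<open>finite S\<close>
    by (intro divide_right_mono ps_bounded_sum_reindex) (auto simp: inj_on_def)
  finally show "sum (ps_weight (ps_dX a) (\<rho> / 2) \<sigma>) S \<le> B / \<rho>" .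
qed

lemma convergent_ps_sub:
  assumes "convergent_ps a" "convergent_ps b"
  shows "convergent_ps (ps_sub a b)"
proof -
  obtain r A B where "0 < r" "ps_bounded a r r A" "ps_bounded b r r B"
    using assms by (rule convergent_ps_common_radius)
  then show ?thesis by (intro convergent_psI[OF _ _ ps_bounded_sub]) auto
qed

lemma convergent_ps_mul:
  assumes "convergent_ps a" "convergent_ps b"
  shows "convergent_ps (ps_mul a b)"
proof -
  obtain r A B where "0 < r" "ps_bounded a r r A" "ps_bounded b r r B"
    using assms by (rule convergent_ps_common_radius)
  then show ?thesis by (intro convergent_psI[OF _ _ ps_bounded_mul]) auto
qed

lemma convergent_ps_swap: "convergent_ps a \<Longrightarrow> convergent_ps (ps_swap a)"
  unfolding convergent_ps_iff_bounded by (auto dest: ps_bounded_swap)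

lemma convergent_ps_dX:
  assumes "convergent_ps a"
  shows "convergent_ps (ps_dX a)"
proof -
  obtain r B where "0 < r" "ps_bounded a r r B"
    using assms unfolding convergent_ps_iff_bounded by blast
  then show ?thesis by (intro convergent_psI[OF _ _ ps_bounded_dX]) auto
qed

lemma convergent_ps_dY: "convergent_ps a \<Longrightarrow> convergent_ps (ps_dY a)"
  using convergent_ps_dX[of "ps_swap a"] convergent_ps_swap[of "ps_dX (ps_swap a)"]
  by (simp add: ps_dX_swap convergent_ps_swap)

lemma convergent_ps_neg: "convergent_ps a \<Longrightarrow> convergent_ps (ps_neg a)"
  by (simp add: convergent_ps_def ps_neg_def)

lemma convergent_ps_jac: "convergent_ps f \<Longrightarrow> convergent_ps l \<Longrightarrow> convergent_ps (ps_jac f l)"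
  unfolding ps_jac_def
  by (intro convergent_ps_sub convergent_ps_mul convergent_ps_dX convergent_ps_dY)

section \<open>Division by a series with a linear term in Y\<close>

definition ps_quot_terms :: "nat \<Rightarrow> nat \<Rightarrow> (nat \<times> nat) set" where
  "ps_quot_terms i j = {..i} \<times> {..Suc j} - {(0, 0), (0, 1)}"

lemma ps_quot_terms_finite: "finite (ps_quot_terms i j)"
  unfolding ps_quot_terms_def by (intro finite_Diff finite_cartesian_product finite_atMost)

lemma ps_quot_terms_index_decrease:
  assumes "x \<in> ps_quot_terms i j"
  shows "(i - fst x) + (Suc j - snd x) < i + j
    \<or> (i - fst x) + (Suc j - snd x) = i + j \<and> i - fst x < i"
proof -
  have "fst x \<le> i" "snd x \<le> Suc j" "\<not> (fst x = 0 \<and> snd x = 0)" "\<not> (fst x = 0 \<and> snd x = 1)"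
    using assms unfolding ps_quot_terms_def by (auto simp: prod_eq_iff)
  then show ?thesis by linarith
qed

text \<open>The coefficient of \<open>X\<^sup>i Y\<^sup>j\<^sup>+\<^sup>1\<close> of \<open>f = l * q\<close>, solved for \<open>q i j\<close>:
  for \<open>l 0 1 \<noteq> 0\<close> this divides f by l, leaving a remainder in \<open>\<complex>{X}\<close>.\<close>
function ps_quot :: "cps \<Rightarrow> cps \<Rightarrow> nat \<Rightarrow> nat \<Rightarrow> complex" where
  "ps_quot f l i j =
     (f i (Suc j) - (\<Sum>x\<in>ps_quot_terms i j. l (fst x) (snd x) * ps_quot f l (i - fst x) (Suc j - snd x)))
     / l 0 1"
  by auto
termination
  by (relation "measures [\<lambda>(f, l, i, j). i + j, \<lambda>(f, l, i, j). i]")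
    (auto dest!: ps_quot_terms_index_decrease)

declare ps_quot.simps [simp del]

lemma ps_quot_eq:
  assumes "l 0 1 \<noteq> 0"
  shows "l 0 1 * ps_quot f l i j
    = f i (Suc j) - (\<Sum>x\<in>ps_quot_terms i j. l (fst x) (snd x) * ps_quot f l (i - fst x) (Suc j - snd x))"
  using assms by (subst ps_quot.simps) simp

lemma ps_mul_quot_Y_coeff:
  assumes "l 0 0 = 0" "l 0 1 \<noteq> 0"
  shows "ps_mul l (ps_quot f l) i (Suc j) = f i (Suc j)"
proof -
  define g where "g x = l (fst x) (snd x) * ps_quot f l (i - fst x) (Suc j - snd x)" for x
  have box: "{..i} \<times> {..Suc j} = insert (0, 1) (insert (0, 0) (ps_quot_terms i j))"
    by (auto simp: ps_quot_terms_def)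
  have "ps_mul l (ps_quot f l) i (Suc j) = sum g ({..i} \<times> {..Suc j})"
    by (simp add: ps_mul_eq_sum_Times g_def case_prod_unfold)
  also have "\<dots> = g (0, 1) + g (0, 0) + sum g (ps_quot_terms i j)"
    unfolding box by (simp add: ps_quot_terms_finite ps_quot_terms_def)
  also have "\<dots> = f i (Suc j)"
    using ps_quot_eq[of l, OF assms(2)] assms(1) by (simp add: g_def)
  finally show ?thesis .
qed

lemma ps_quot_weight_le:
  assumes "0 \<le> \<rho>" "0 \<le> \<sigma>" "l 0 1 \<noteq> 0"
  shows "norm (l 0 1) * \<sigma> * ps_weight (ps_quot f l) \<rho> \<sigma> (i, j)
    \<le> ps_weight f \<rho> \<sigma> (i, Suc j) + (\<Sum>x\<in>ps_quot_terms i j.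
          ps_weight l \<rho> \<sigma> x * ps_weight (ps_quot f l) \<rho> \<sigma> (i - fst x, Suc j - snd x))"
proof -
  let ?w = "\<rho> ^ i * \<sigma> ^ Suc j"
  have "norm (l 0 1) * norm (ps_quot f l i j)
      \<le> norm (f i (Suc j)) + (\<Sum>x\<in>ps_quot_terms i j.
          norm (l (fst x) (snd x)) * norm (ps_quot f l (i - fst x) (Suc j - snd x)))"
    unfolding norm_mult[symmetric] ps_quot_eq[of l, OF assms(3)]
    by (rule order_trans[OF norm_triangle_ineq4 add_left_mono], rule order_trans[OF norm_sum])
      (simp add: norm_mult)
  then have "norm (l 0 1) * norm (ps_quot f l i j) * ?w
      \<le> (norm (f i (Suc j)) + (\<Sum>x\<in>ps_quot_terms i j.
          norm (l (fst x) (snd x)) * norm (ps_quot f l (i - fst x) (Suc j - snd x)))) * ?w"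
    using assms(1,2) by (intro mult_right_mono) auto
  also have "\<dots> = ps_weight f \<rho> \<sigma> (i, Suc j) + (\<Sum>x\<in>ps_quot_terms i j.
          ps_weight l \<rho> \<sigma> x * ps_weight (ps_quot f l) \<rho> \<sigma> (i - fst x, Suc j - snd x))"
    unfolding distrib_right sum_distrib_right
  proof (intro arg_cong2[where f = "(+)"] sum.cong refl)
    fix x assume "x \<in> ps_quot_terms i j"
    then have "fst x \<le> i" "snd x \<le> Suc j" by (auto simp: ps_quot_terms_def)
    then have "?w = (\<rho> ^ fst x * \<sigma> ^ snd x) * (\<rho> ^ (i - fst x) * \<sigma> ^ (Suc j - snd x))"
      by (simp add: mult_ac flip: power_add)
    then show "norm (l (fst x) (snd x)) * norm (ps_quot f l (i - fst x) (Suc j - snd x)) * ?w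
        = ps_weight l \<rho> \<sigma> x * ps_weight (ps_quot f l) \<rho> \<sigma> (i - fst x, Suc j - snd x)"
      by (cases x) (simp add: mult_ac)
  qed (simp add: mult_ac)
  finally show ?thesis by (simp add: mult_ac)
qed

text \<open>A majorant argument: on every triangle \<open>i + j \<le> n\<close> the weighted sum Q of the quotient
  satisfies \<open>\<bar>l 0 1\<bar> \<sigma> Q \<le> B + \<bar>l 0 1\<bar> \<sigma> Q / 2\<close>, because the terms of l other than \<open>Y\<close> are
  small for the polyradius (\<rho>, \<sigma>).\<close>
lemma ps_bounded_quot:
  assumes pos: "0 < \<rho>" "0 < \<sigma>" and l01: "l 0 1 \<noteq> 0" and f: "ps_bounded f \<rho> \<sigma> B"
    and l: "\<And>S. finite S \<Longrightarrow> S \<inter> {(0, 0), (0, 1)} = {} \<Longrightarrow>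
      sum (ps_weight l \<rho> \<sigma>) S \<le> norm (l 0 1) * \<sigma> / 2"
  shows "ps_bounded (ps_quot f l) \<rho> \<sigma> (2 * B / (norm (l 0 1) * \<sigma>))"
  unfolding ps_bounded_def
proof (intro allI impI)
  fix S :: "(nat \<times> nat) set"
  assume "finite S"
  then obtain n where "S \<subseteq> {..n} \<times> {..n}" using finite_subset_square by blast
  define T where "T = {x \<in> {..n + n} \<times> {..n + n}. fst x + snd x \<le> n + n}"
  define P where "P = {..n + n} \<times> {..Suc (n + n)} - {(0, 0), (0, 1)}"
  let ?wq = "ps_weight (ps_quot f l) \<rho> \<sigma>" and ?wl = "ps_weight l \<rho> \<sigma>"
  let ?split = "\<lambda>(x, y). (y, (fst x - fst y, Suc (snd x) - snd y))"
  let ?U = "SIGMA x:T. ps_quot_terms (fst x) (snd x)"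
  define Q where "Q = sum ?wq T"
  have fin: "finite T" "finite P" by (simp_all add: T_def P_def)
  have "norm (l 0 1) * \<sigma> * Q
      \<le> (\<Sum>x\<in>T. ps_weight f \<rho> \<sigma> (fst x, Suc (snd x))
             + (\<Sum>y\<in>ps_quot_terms (fst x) (snd x). ?wl y * ?wq (fst x - fst y, Suc (snd x) - snd y)))"
    unfolding Q_def sum_distrib_left
    using ps_quot_weight_le[of \<rho> \<sigma> l f] pos l01 by (intro sum_mono) auto
  also have "\<dots> = (\<Sum>x\<in>T. ps_weight f \<rho> \<sigma> (fst x, Suc (snd x)))
      + (\<Sum>z\<in>?U. (\<lambda>(y, y'). ?wl y * ?wq y') (?split z))"
    using fin by (simp add: sum.distrib sum.Sigma ps_quot_terms_finite case_prod_unfold)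
  also have "\<dots> \<le> B + (\<Sum>(y, y')\<in>P \<times> T. ?wl y * ?wq y')"
  proof (intro add_mono)
    show "(\<Sum>x\<in>T. ps_weight f \<rho> \<sigma> (fst x, Suc (snd x))) \<le> B"
      using f fin pos by (intro ps_bounded_sum_reindex) (auto simp: inj_on_def prod_eq_iff)
    show "(\<Sum>z\<in>?U. (\<lambda>(y, y'). ?wl y * ?wq y') (?split z))
        \<le> (\<Sum>(y, y')\<in>P \<times> T. ?wl y * ?wq y')"
    proof (rule sum_comp_le_of_inj_on)
      show "inj_on ?split ?U"
        by (auto simp: inj_on_def ps_quot_terms_def prod_eq_iff)
      show "?split ` ?U \<subseteq> P \<times> T"
        by (auto simp: T_def P_def ps_quot_terms_def)
    qed (use fin pos in \<open>auto simp: ps_weight_nonneg intro!: mult_nonneg_nonneg\<close>)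
  qed
  also have "\<dots> = B + sum ?wl P * Q"
    by (simp add: Q_def sum_product sum.cartesian_product)
  also have "\<dots> \<le> B + norm (l 0 1) * \<sigma> / 2 * Q"
    using l[of P] fin pos unfolding Q_def
    by (intro add_left_mono mult_right_mono sum_nonneg) (auto simp: P_def ps_weight_nonneg)
  finally have "Q \<le> 2 * B / (norm (l 0 1) * \<sigma>)"
    using pos l01 by (simp add: field_simps)
  moreover have "sum ?wq S \<le> Q"
    unfolding Q_def using \<open>S \<subseteq> {..n} \<times> {..n}\<close> fin pos
    by (intro sum_mono2) (auto simp: T_def ps_weight_nonneg)
  ultimately show "sum ?wq S \<le> 2 * B / (norm (l 0 1) * \<sigma>)" by simp
qed

lemma ps_radii_Y_term_dominant:
  assumes "convergent_ps l" "l 0 1 \<noteq> 0" "0 < r"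
  obtains \<rho> \<sigma> where "0 < \<rho>" "\<rho> \<le> r" "0 < \<sigma>" "\<sigma> \<le> r"
    "\<And>S. finite S \<Longrightarrow> S \<inter> {(0, 0), (0, 1)} = {} \<Longrightarrow>
       sum (ps_weight l \<rho> \<sigma>) S \<le> norm (l 0 1) * \<sigma> / 2"
proof -
  obtain r' C where "0 < r'" "ps_bounded l r' r' C"
    using assms(1) unfolding convergent_ps_iff_bounded by blast
  define r0 where "r0 = min r r'"
  have r0: "0 < r0" "r0 \<le> r" and C: "ps_bounded l r0 r0 C"
    using \<open>0 < r'\<close> assms(3) ps_bounded_mono[OF \<open>ps_bounded l r' r' C\<close>, of r0 r0]
    by (auto simp: r0_def)
  have "0 \<le> C" using C by (rule ps_bounded_nonneg)
  define b where "b = norm (l 0 1)"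
  define a where "a = norm (l 1 0)"
  have "0 < b" "0 \<le> a" using assms(2) by (simp_all add: a_def b_def)
  define \<sigma> where "\<sigma> = min r0 (b * r0\<^sup>2 / (4 * (C + 1)))"
  have \<sigma>: "0 < \<sigma>" "\<sigma> \<le> r0"
    using r0 \<open>0 < b\<close> \<open>0 \<le> C\<close> by (auto simp: \<sigma>_def)
  have "\<sigma> * C \<le> b * r0\<^sup>2 / (4 * (C + 1)) * (C + 1)"
    using \<sigma> \<open>0 \<le> C\<close> by (intro mult_mono) (auto simp: \<sigma>_def)
  also have "\<dots> = b * r0\<^sup>2 / 4"
    using \<open>0 \<le> C\<close> by (simp add: field_simps)
  finally have \<sigma>C: "\<sigma> * C \<le> b * r0\<^sup>2 / 4" .
  define c where "c = min 1 (b / (4 * (a + 1)))"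
  have c: "0 < c" "c \<le> 1" "a * c \<le> b / 4"
  proof -
    have "a * c \<le> a * (b / (4 * (a + 1)))"
      using \<open>0 \<le> a\<close> by (intro mult_left_mono) (auto simp: c_def)
    also have "\<dots> \<le> b / 4"
      using \<open>0 \<le> a\<close> \<open>0 < b\<close> by (simp add: field_simps)
    finally show "a * c \<le> b / 4" .
  qed (use \<open>0 \<le> a\<close> \<open>0 < b\<close> in \<open>auto simp: c_def\<close>)
  define \<rho> where "\<rho> = c * \<sigma>"
  have \<rho>: "0 < \<rho>" "\<rho> \<le> \<sigma>" "a * \<rho> \<le> b * \<sigma> / 4"
    using c \<sigma> mult_right_mono[OF c(3), of \<sigma>] mult_right_mono[OF c(2), of \<sigma>]
    by (auto simp: \<rho>_def mult.assoc[symmetric])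
  show thesis
  proof (rule that[of \<rho> \<sigma>])
    fix S :: "(nat \<times> nat) set"
    assume S: "finite S" "S \<inter> {(0, 0), (0, 1)} = {}"
    let ?w = "ps_weight l \<rho> \<sigma>"
    have quadratic: "?w x \<le> ps_weight l r0 r0 x * (\<sigma> / r0)\<^sup>2" if "x \<in> S - {(1, 0)}" for x
    proof (cases x)
      case (Pair p q)
      with that S(2) have "(p, q) \<notin> {(0, 0), (0, 1), (1, 0)}"
        by blast
      moreover have "(p, q) \<in> {(0, 0), (0, 1), (1, 0)}" if "p + q < 2"
        using that by (cases p) auto
      ultimately have "2 \<le> p + q" by linarith
      have "\<rho> ^ p * \<sigma> ^ q \<le> \<sigma> ^ (p + q)"
        using \<rho> by (simp add: power_add power_mono)
      also have "\<dots> = r0 ^ (p + q) * (\<sigma> / r0) ^ (p + q)"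
        using r0 by (simp add: power_divide)
      also have "\<dots> \<le> r0 ^ (p + q) * (\<sigma> / r0)\<^sup>2"
        using r0 \<sigma> \<open>2 \<le> p + q\<close> by (intro mult_left_mono power_decreasing) auto
      finally show ?thesis
        using Pair by (simp add: mult.assoc power_add mult_left_mono)
    qed
    have "sum ?w (S - {(1, 0)}) \<le> sum (ps_weight l r0 r0) (S - {(1, 0)}) * (\<sigma> / r0)\<^sup>2"
      unfolding sum_distrib_right by (intro sum_mono quadratic)
    also have "\<dots> \<le> C * (\<sigma> / r0)\<^sup>2"
      using C S by (intro mult_right_mono ps_boundedD) auto
    also have "\<dots> = \<sigma> * (\<sigma> * C) / r0\<^sup>2"
      by (simp add: power_divide power2_eq_square)
    also have "\<dots> \<le> \<sigma> * (b * r0\<^sup>2 / 4) / r0\<^sup>2"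
      using \<sigma> \<sigma>C by (intro divide_right_mono mult_left_mono) auto
    also have "\<dots> = b * \<sigma> / 4"
      using r0 by (simp add: field_simps)
    finally have tail: "sum ?w (S - {(1, 0)}) \<le> b * \<sigma> / 4" .
    have "sum ?w S \<le> sum ?w (insert (1, 0) S)"
      using S \<rho> \<sigma> by (intro sum_mono2) (auto simp: ps_weight_nonneg)
    also have "\<dots> = a * \<rho> + sum ?w (S - {(1, 0)})"
      using S by (simp add: sum.insert_remove a_def)
    also have "\<dots> \<le> b * \<sigma> / 4 + b * \<sigma> / 4"
      using \<rho>(3) tail by (rule add_mono)
    finally show "sum ?w S \<le> norm (l 0 1) * \<sigma> / 2"
      by (simp add: b_def mult.commute)
  qed (use \<rho> \<sigma> r0 in auto)
qed

lemma convergent_ps_quot: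
  assumes "convergent_ps f" "convergent_ps l" "l 0 1 \<noteq> 0"
  shows "convergent_ps (ps_quot f l)"
proof -
  obtain r B where "0 < r" "ps_bounded f r r B"
    using assms(1) unfolding convergent_ps_iff_bounded by blast
  obtain \<rho> \<sigma> where radii: "0 < \<rho>" "\<rho> \<le> r" "0 < \<sigma>" "\<sigma> \<le> r"
    and l: "\<And>S. finite S \<Longrightarrow> S \<inter> {(0, 0), (0, 1)} = {} \<Longrightarrow>
      sum (ps_weight l \<rho> \<sigma>) S \<le> norm (l 0 1) * \<sigma> / 2"
    using ps_radii_Y_term_dominant[OF assms(2,3) \<open>0 < r\<close>] by blast
  have "ps_bounded f \<rho> \<sigma> B"
    using radii by (intro ps_bounded_mono[OF \<open>ps_bounded f r r B\<close>]) auto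
  then show ?thesis
    by (rule convergent_psI[OF radii(1,3) ps_bounded_quot[OF radii(1,3) assms(3) _ l]])
qed

section \<open>Series in X alone are not multiples of l\<close>

lemma ps_mul_X_only_left:
  assumes "\<And>i j. 0 < j \<Longrightarrow> s i j = 0"
  shows "ps_mul s w i j = (\<Sum>p\<le>i. s p 0 * w (i - p) j)"
  unfolding ps_mul_def
proof (rule sum.cong[OF refl])
  fix p
  have "(\<Sum>q\<le>j. s p q * w (i - p) (j - q)) = s p 0 * w (i - p) (j - 0)"
    by (rule sum.remove[THEN trans]) (auto simp: assms intro!: sum.neutral)
  then show "(\<Sum>q\<le>j. s p q * w (i - p) (j - q)) = s p 0 * w (i - p) j" by simp
qed

lemma ps_initial_term:
  assumes "m \<noteq> ps_zero"
  obtains d k where "k \<le> d" "m k (d - k) \<noteq> 0"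
    "\<And>i j. i + j < d \<Longrightarrow> m i j = 0" "\<And>i. i < k \<Longrightarrow> m i (d - i) = 0"
proof -
  obtain i0 j0 where "m i0 j0 \<noteq> 0"
    using assms unfolding ps_zero_def by (meson ext)
  then have ex: "\<exists>i\<le>i0 + j0. m i (i0 + j0 - i) \<noteq> 0" by (intro exI[of _ i0]) auto
  define d where "d = (LEAST d. \<exists>i\<le>d. m i (d - i) \<noteq> 0)"
  have "\<exists>i\<le>d. m i (d - i) \<noteq> 0"
    unfolding d_def using ex by (rule LeastI)
  define k where "k = (LEAST i. i \<le> d \<and> m i (d - i) \<noteq> 0)"
  have k: "k \<le> d" "m k (d - k) \<noteq> 0"
    unfolding k_def using LeastI_ex[OF \<open>\<exists>i\<le>d. m i (d - i) \<noteq> 0\<close>] by auto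
  show thesis
  proof (rule that[OF k])
    fix i j assume "i + j < d"
    show "m i j = 0"
    proof (rule ccontr)
      assume "m i j \<noteq> 0"
      then have "\<exists>i'\<le>i + j. m i' (i + j - i') \<noteq> 0" by (intro exI[of _ i]) auto
      then have "d \<le> i + j" unfolding d_def by (rule Least_le)
      with \<open>i + j < d\<close> show False by simp
    qed
  next
    fix i assume "i < k"
    then show "m i (d - i) = 0"
      using not_less_Least[of i "\<lambda>i. i \<le> d \<and> m i (d - i) \<noteq> 0"] k(1) by (auto simp: k_def)
  qed
qed

lemma ps_mul_low_degree:
  assumes "l 0 0 = 0" "\<And>i j. i + j < d \<Longrightarrow> m i j = 0" "i + j \<le> d"
  shows "ps_mul l m i j = 0"
  unfolding ps_mul_eq_sum_Times
proof (rule sum.neutral, clarify)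
  fix p q assume "p \<le> i" "q \<le> j"
  show "l p q * m (i - p) (j - q) = 0"
  proof (cases "p = 0 \<and> q = 0")
    case False
    then have "(i - p) + (j - q) < d" using \<open>p \<le> i\<close> \<open>q \<le> j\<close> assms(3) by linarith
    then show ?thesis using assms(2) by simp
  qed (use assms(1) in simp)
qed

lemma ps_mul_initial_Y_coeff:
  assumes "l 0 0 = 0" "k \<le> d" "\<And>i j. i + j < d \<Longrightarrow> m i j = 0" "\<And>i. i < k \<Longrightarrow> m i (d - i) = 0"
  shows "ps_mul l m k (Suc (d - k)) = l 0 1 * m k (d - k)"
proof -
  let ?g = "\<lambda>(p, q). l p q * m (k - p) (Suc (d - k) - q)"
  have others: "?g x = 0" if x: "x \<in> {..k} \<times> {..Suc (d - k)}" "x \<noteq> (0, 1)" for x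
  proof (cases x)
    case (Pair p q)
    have "q \<noteq> 1 \<or> p \<noteq> 0" using x(2) Pair by auto
    then have "p = 0 \<and> q = 0 \<or> p = 1 \<and> q = 0 \<or> 2 \<le> p + q" by presburger
    then consider "p = 0 \<and> q = 0" | "p = 1 \<and> q = 0" | "2 \<le> p + q" by blast
    then show ?thesis
    proof cases
      case 1
      then show ?thesis using Pair assms(1) by simp
    next
      case 2
      then have "k - 1 < k" "d - (k - 1) = Suc (d - k)" using x Pair assms(2) by auto
      then show ?thesis using 2 Pair assms(2) assms(4)[of "k - 1"] by (simp add: Suc_diff_le)
    next
      case 3
      then have "(k - p) + (Suc (d - k) - q) < d" using x Pair assms(2) by auto
      then show ?thesis using Pair assms(3) by simp
    qed
  qed
  have "sum ?g ({..k} \<times> {..Suc (d - k)}) = ?g (0, 1) + sum ?g ({..k} \<times> {..Suc (d - k)} - {(0, 1)})"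
    by (rule sum.remove) auto
  also have "sum ?g ({..k} \<times> {..Suc (d - k)} - {(0, 1)}) = 0"
    using others by (intro sum.neutral) blast
  finally show ?thesis by (simp add: ps_mul_eq_sum_Times)
qed

text \<open>Comparing the lowest-degree term of m with the \<open>X\<close>-adic order of s: the product l * m
  has a term \<open>X\<^sup>k Y\<^sup>d\<^sup>-\<^sup>k\<^sup>+\<^sup>1\<close> below that order, which s * w cannot have.\<close>
lemma ps_X_only_eq_zero_if_mul_eq:
  assumes eq: "ps_mul s w = ps_mul l m" and X_only: "\<And>i j. 0 < j \<Longrightarrow> s i j = 0"
    and "w 0 0 \<noteq> 0" "l 0 0 = 0" "l 0 1 \<noteq> 0"
  shows "s = ps_zero"
proof (rule ccontr)
  assume "s \<noteq> ps_zero"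
  then obtain i j where "s i j \<noteq> 0"
    by (auto simp: ps_zero_def fun_eq_iff)
  with X_only have "s i 0 \<noteq> 0" by (cases j) auto
  define n where "n = (LEAST i. s i 0 \<noteq> 0)"
  have "s n 0 \<noteq> 0" unfolding n_def using \<open>s i 0 \<noteq> 0\<close> by (rule LeastI)
  have below_n: "s p 0 = 0" if "p < n" for p
    using not_less_Least[of p "\<lambda>i. s i 0 \<noteq> 0"] that by (simp add: n_def)
  have sw: "ps_mul s w i j = (\<Sum>p\<le>i. s p 0 * w (i - p) j)" for i j
    using X_only by (rule ps_mul_X_only_left)
  have "ps_mul s w n 0 = s n 0 * w 0 0 + (\<Sum>p\<in>{..n} - {n}. s p 0 * w (n - p) 0)"
    unfolding sw using sum.remove[of "{..n}" n "\<lambda>p. s p 0 * w (n - p) 0"] by simp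
  also have "(\<Sum>p\<in>{..n} - {n}. s p 0 * w (n - p) 0) = 0"
    using below_n by (intro sum.neutral) auto
  finally have lm_n: "ps_mul l m n 0 \<noteq> 0"
    using eq \<open>s n 0 \<noteq> 0\<close> \<open>w 0 0 \<noteq> 0\<close> by simp
  have "m \<noteq> ps_zero"
  proof
    assume "m = ps_zero"
    then have "ps_mul l m n 0 = 0" by (simp add: ps_mul_def ps_zero_def)
    with lm_n show False ..
  qed
  then obtain d k where k: "k \<le> d" "m k (d - k) \<noteq> 0"
    and low: "\<And>i j. i + j < d \<Longrightarrow> m i j = 0" and left: "\<And>i. i < k \<Longrightarrow> m i (d - i) = 0"
    by (rule ps_initial_term) blast
  have "d < n"
  proof (rule ccontr)
    assume "\<not> d < n"
    then have "ps_mul l m n 0 = 0"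
      by (intro ps_mul_low_degree[where m = m and d = d] \<open>l 0 0 = 0\<close> low) auto
    with lm_n show False ..
  qed
  have "ps_mul s w k (Suc (d - k)) = l 0 1 * m k (d - k)"
    unfolding eq by (rule ps_mul_initial_Y_coeff[where l = l and m = m, OF \<open>l 0 0 = 0\<close> k(1) low left])
  also have "\<dots> \<noteq> 0" using k(2) \<open>l 0 1 \<noteq> 0\<close> by simp
  finally obtain p where "p \<le> k" "s p 0 \<noteq> 0"
    unfolding sw by (auto elim: sum.not_neutral_contains_not_neutral)
  then show False
    using below_n k(1) \<open>d < n\<close> by simp
qed

lemma ps_eq_zero_if_derivs_eq_zero:
  assumes "ps_dX r = ps_zero" "ps_dY r = ps_zero" "r 0 0 = 0"
  shows "r = ps_zero"
proof -
  have X: "r (Suc i) j = 0" for i j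
    using fun_cong[OF fun_cong[OF assms(1)], of i j] by (simp add: ps_dX_def ps_zero_def del: of_nat_Suc)
  have Y: "r i (Suc j) = 0" for i j
    using fun_cong[OF fun_cong[OF assms(2)], of i j] by (simp add: ps_dY_def ps_zero_def del: of_nat_Suc)
  show ?thesis
  proof (intro ext)
    fix i j
    show "r i j = ps_zero i j"
      using X Y assms(3) by (cases i; cases j) (simp_all add: ps_zero_def)
  qed
qed

lemma ps_dvd_iff_dvd_jac:
  assumes f: "convergent_ps f" "f 0 0 = 0" and l: "convergent_ps l" "l 0 0 = 0" "l 0 1 \<noteq> 0"
  shows "ps_dvd l f \<longleftrightarrow> ps_dvd l (ps_jac f l)"
proof
  assume "ps_dvd l f"
  then obtain h where h: "convergent_ps h" "f = ps_mul l h" unfolding ps_dvd_def by blast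
  then have "ps_jac f l = ps_mul l (ps_jac h l)" by (simp add: ps_jac_mul_left)
  moreover have "convergent_ps (ps_jac h l)" using h(1) l(1) by (rule convergent_ps_jac)
  ultimately show "ps_dvd l (ps_jac f l)" unfolding ps_dvd_def by blast
next
  assume "ps_dvd l (ps_jac f l)"
  then obtain k where k: "ps_jac f l = ps_mul l k" unfolding ps_dvd_def by blast
  define q where "q = ps_quot f l"
  define r where "r = ps_sub f (ps_mul l q)"
  have r_Y: "r i (Suc j) = 0" for i j
    using ps_mul_quot_Y_coeff[of l f i j] l(2,3) by (simp add: r_def q_def ps_sub_def)
  have dY_r: "ps_dY r = ps_zero"
    by (simp add: ps_dY_def ps_zero_def r_Y)
  have "ps_mul (ps_dX r) (ps_dY l) = ps_sub (ps_jac f l) (ps_mul l (ps_jac q l))"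
    using dY_r unfolding r_def by (rule ps_jac_Y_free_remainder)
  also have "\<dots> = ps_mul l (ps_sub k (ps_jac q l))"
    by (simp add: k ps_mul_sub_right)
  finally have "ps_dX r = ps_zero"
  proof (rule ps_X_only_eq_zero_if_mul_eq)
    show "ps_dX r i j = 0" if "0 < j" for i j
      using that r_Y by (cases j) (simp_all add: ps_dX_def)
  qed (use l(2,3) in \<open>simp_all add: ps_dY_def\<close>)
  moreover have "ps_mul l q 0 0 = l 0 0 * q 0 0"
    by (simp add: ps_mul_def)
  then have "r 0 0 = 0"
    using f(2) l(2) by (simp add: r_def ps_sub_def)
  ultimately have "r = ps_zero"
    by (rule ps_eq_zero_if_derivs_eq_zero[OF _ dY_r])
  have "f = ps_mul l q"
  proof (intro ext)
    fix i j
    have "r i j = 0" using \<open>r = ps_zero\<close> by (simp add: ps_zero_def)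
    then show "f i j = ps_mul l q i j" by (simp add: r_def ps_sub_def)
  qed
  moreover have "convergent_ps q"
    unfolding q_def using f(1) l(1,3) by (rule convergent_ps_quot)
  ultimately show "ps_dvd l f" unfolding ps_dvd_def by blast
qed

lemma ps_ord_eq_1_linear_coeff:
  assumes "ps_ord l = 1"
  shows "l 0 1 \<noteq> 0 \<or> l 1 0 \<noteq> 0"
proof -
  have "l \<noteq> ps_zero" using assms by (auto simp: ps_ord_def)
  then have least: "(LEAST n. \<exists>i j. i + j = n \<and> l i j \<noteq> 0) = 1"
    using assms by (simp add: ps_ord_def one_enat_def)
  obtain i j where "l i j \<noteq> 0"
    using \<open>l \<noteq> ps_zero\<close> by (auto simp: ps_zero_def fun_eq_iff)
  then have "\<exists>n i j. i + j = n \<and> l i j \<noteq> 0" by blast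
  then have "\<exists>i j. i + j = (LEAST n. \<exists>i j. i + j = n \<and> l i j \<noteq> 0) \<and> l i j \<noteq> 0"
    by (rule LeastI_ex)
  then obtain i j where "i + j = 1" "l i j \<noteq> 0" unfolding least by blast
  then show ?thesis by (cases i) auto
qed

lemma ps_dvd_swap_iff: "ps_dvd (ps_swap l) (ps_swap f) \<longleftrightarrow> ps_dvd l f"
proof -
  have "ps_dvd (ps_swap l) (ps_swap f)" if dvd: "ps_dvd l f" for l f
  proof -
    obtain h where "convergent_ps h" "f = ps_mul l h" using dvd unfolding ps_dvd_def by blast
    then have "convergent_ps (ps_swap h)" "ps_swap f = ps_mul (ps_swap l) (ps_swap h)"
      by (simp_all add: convergent_ps_swap ps_swap_mul)
    then show ?thesis unfolding ps_dvd_def by blast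
  qed
  from this[of l f] this[of "ps_swap l" "ps_swap f"] show ?thesis by auto
qed

lemma ps_dvd_neg_iff: "ps_dvd l (ps_neg f) \<longleftrightarrow> ps_dvd l f"
proof -
  have "ps_dvd l (ps_neg f)" if dvd: "ps_dvd l f" for f
  proof -
    obtain h where "convergent_ps h" "f = ps_mul l h" using dvd unfolding ps_dvd_def by blast
    moreover have "ps_neg (ps_mul l h) = ps_mul l (ps_neg h)"
      by (simp add: ps_neg_def ps_mul_def sum_negf)
    ultimately show ?thesis unfolding ps_dvd_def using convergent_ps_neg by blast
  qed
  moreover have "ps_neg (ps_neg f) = f" by (simp add: ps_neg_def)
  ultimately show ?thesis by (metis (no_types))
qed

theorem mainTheorem1:
  fixes f l :: cps
  assumes "convergent_ps f" and "f \<noteq> ps_zero" and "f 0 0 = 0"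
    and "ps_reduced f"
    and "convergent_ps l" and "l 0 0 = 0" and "ps_ord l = 1"
    and "ps_jac f l 0 0 = 0"
  shows "\<not> ps_dvd l f \<longleftrightarrow> \<not> ps_dvd l (ps_jac f l)"
proof (cases "l 0 1 = 0")
  case False
  then show ?thesis using ps_dvd_iff_dvd_jac assms(1,3,5,6) by blast
next
  case True
  then have "ps_swap l 0 1 \<noteq> 0"
    using ps_ord_eq_1_linear_coeff[OF assms(7)] by (simp add: ps_swap_def)
  then have "ps_dvd (ps_swap l) (ps_swap f) \<longleftrightarrow> ps_dvd (ps_swap l) (ps_jac (ps_swap f) (ps_swap l))"
    using assms(1,3,5,6) by (intro ps_dvd_iff_dvd_jac convergent_ps_swap) (simp_all add: ps_swap_def)
  then show ?thesis
    by (simp add: ps_jac_swap ps_dvd_swap_iff ps_dvd_neg_iff)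
qed

end
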